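(* Let $A,B\in M_n(\mathbb{R}_+)$ be nilpotent and let $C=[A,B]_\oplus=AB\oplus BA$. If the digraph $G_{A\oplus B}$ contains a directed cycle, then there exist indices $u,w$ such that $C_{uw}>0$.
   Context: Max algebra: $\mathbb{R}_+$ the nonnegative reals with $a\oplus b=\max\{a,b\}$ and ordinary multiplication; for $A,B\in M_n(\mathbb{R}_+)$, $(AB)_{ij}=\max_k a_{ik}b_{kj}$ and $(A\oplus B)_{ij}=\max\{a_{ij},b_{ij}\}$. A matrix $A$ is nilpotent if $A^k=0$ for some $k\in\mathbb{N}$ (powers in the max-product). The digraph $G_M$ of $M=(m_{ij})$ has vertices $\{1,\dots,n\}$ and an edge $i\to j$ iff $m_{ij}>0$. *)

theory Defs
  imports "HOL-Analysis.Analysis"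
begin

text \<open>Max algebra over the nonnegative reals. Matrices in M_n(R_+) are rendered
as real^'n^'n (index type 'n finite, n = CARD('n)) with all entries nonnegative.\<close>

definition nonneg_mat :: "real^'n^'n \<Rightarrow> bool" where
  "nonneg_mat A \<longleftrightarrow> (\<forall>i j. A $ i $ j \<ge> 0)"

definition max_mult :: "real^'n::finite^'n \<Rightarrow> real^'n^'n \<Rightarrow> real^'n^'n" (infixl "\<otimes>\<^sub>m" 70) where
  "A \<otimes>\<^sub>m B = (\<chi> i j. Max {A $ i $ k * B $ k $ j | k. True})"

definition max_add :: "real^'n^'n \<Rightarrow> real^'n^'n \<Rightarrow> real^'n^'n" (infixl "\<oplus>\<^sub>m" 65) where
  "A \<oplus>\<^sub>m B = (\<chi> i j. max (A $ i $ j) (B $ i $ j))"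

primrec max_pow :: "real^'n::finite^'n \<Rightarrow> nat \<Rightarrow> real^'n^'n" where
  "max_pow A 0 = mat 1"
| "max_pow A (Suc k) = max_pow A k \<otimes>\<^sub>m A"

definition max_nilpotent :: "real^'n::finite^'n \<Rightarrow> bool" where
  "max_nilpotent A \<longleftrightarrow> (\<exists>k. max_pow A k = 0)"

text \<open>Digraph G_M: edge i \<rightarrow> j iff M_ij > 0. A directed cycle is a closed walk
v_0 \<rightarrow> v_1 \<rightarrow> ... \<rightarrow> v_m = v_0 of positive length.\<close>

definition has_directed_cycle :: "real^'n^'n \<Rightarrow> bool" where
  "has_directed_cycle M \<longleftrightarrow>
     (\<exists>m::nat. \<exists>v::nat \<Rightarrow> 'n. m \<ge> 1 \<and> v 0 = v m \<and> (\<forall>t<m. M $ v t $ v (Suc t) > 0))"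

end

theory Submission
  imports Defs
begin

text \<open>If no entry of \<open>AB \<oplus> BA\<close> is positive, then in the digraph of \<open>A \<oplus> B\<close> an edge of
  \<open>G\<^sub>A\<close> is never followed by an edge of \<open>G\<^sub>B\<close> and vice versa, so a directed cycle of
  \<open>G\<^sub>A\<^sub>\<oplus>\<^sub>B\<close> lies entirely in \<open>G\<^sub>A\<close> or entirely in \<open>G\<^sub>B\<close>. But a nilpotent matrix has no
  directed cycle: running around a cycle forever gives walks of every length \<open>k\<close>, and the
  product of the edge weights along such a walk bounds an entry of the \<open>k\<close>-th power from
  below.\<close>

lemma max_mult_entry_ge: "A $ i $ k * B $ k $ j \<le> (A \<otimes>\<^sub>m B) $ i $ j"
proof -
  have "{A $ i $ k * B $ k $ j | k. True} = range (\<lambda>k. A $ i $ k * B $ k $ j)"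
    by auto
  then show ?thesis
    unfolding max_mult_def by (simp add: Max_ge)
qed

lemma max_mult_entry_pos:
  assumes "A $ i $ k > 0" and "B $ k $ j > 0"
  shows "(A \<otimes>\<^sub>m B) $ i $ j > 0"
  using mult_pos_pos[OF assms] max_mult_entry_ge by (rule less_le_trans)

lemma max_add_entry_pos_iff:
  "(A \<oplus>\<^sub>m B) $ i $ j > 0 \<longleftrightarrow> A $ i $ j > 0 \<or> B $ i $ j > 0"
  unfolding max_add_def by (simp add: less_max_iff_disj)

lemma max_add_commute: "A \<oplus>\<^sub>m B = B \<oplus>\<^sub>m A"
  unfolding max_add_def by (simp add: max.commute)

lemma max_pow_walk_pos:
  fixes A :: "real^'n::finite^'n"
  assumes "\<forall>t<k. A $ w t $ w (Suc t) > 0"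
  shows "max_pow A k $ w 0 $ w k > 0"
  using assms
proof (induction k)
  case 0
  then show ?case by (simp add: mat_def)
next
  case (Suc k)
  then show ?case by (simp add: max_mult_entry_pos)
qed

lemma max_nilpotent_no_directed_cycle:
  fixes A :: "real^'n::finite^'n"
  assumes "max_nilpotent A"
  shows "\<not> has_directed_cycle A"
proof
  assume "has_directed_cycle A"
  then obtain m v where m: "m \<ge> 1" and closed: "v 0 = v m"
    and edges: "\<forall>t<m. A $ v t $ v (Suc t) > 0"
    unfolding has_directed_cycle_def by blast
  obtain k where k: "max_pow A k = 0"
    using assms unfolding max_nilpotent_def by blast
  define w where "w t = v (t mod m)" for t
  have "A $ w t $ w (Suc t) > 0" for t
  proof -
    have "w (Suc t) = v (Suc (t mod m))"
      using closed unfolding w_def by (simp add: mod_Suc)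
    then show ?thesis
      using edges m unfolding w_def by simp
  qed
  then have "max_pow A k $ w 0 $ w k > 0"
    by (simp add: max_pow_walk_pos)
  with k show False by simp
qed

lemma directed_cycle_max_add_stays_left:
  assumes "m \<ge> 1" and "v 0 = v m"
    and edges: "\<forall>t<m. (A \<oplus>\<^sub>m B) $ v t $ v (Suc t) > 0"
    and first: "A $ v 0 $ v 1 > 0"
    and no_switch: "\<And>i k j. A $ i $ k > 0 \<Longrightarrow> B $ k $ j > 0 \<Longrightarrow> False"
  shows "has_directed_cycle A"
proof -
  have "A $ v t $ v (Suc t) > 0" if "t < m" for t
    using that
  proof (induction t)
    case 0
    then show ?case using first by simp
  next
    case (Suc t)
    then have "A $ v t $ v (Suc t) > 0" by simp
    with Suc.prems edges no_switch show ?case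
      by (meson max_add_entry_pos_iff)
  qed
  with assms(1,2) show ?thesis
    unfolding has_directed_cycle_def by blast
qed

lemma directed_cycle_max_add:
  assumes "has_directed_cycle (A \<oplus>\<^sub>m B)"
    and "\<And>i k j. A $ i $ k > 0 \<Longrightarrow> B $ k $ j > 0 \<Longrightarrow> False"
    and "\<And>i k j. B $ i $ k > 0 \<Longrightarrow> A $ k $ j > 0 \<Longrightarrow> False"
  shows "has_directed_cycle A \<or> has_directed_cycle B"
proof -
  obtain m v where m: "m \<ge> 1" "v 0 = v m"
    and edges: "\<forall>t<m. (A \<oplus>\<^sub>m B) $ v t $ v (Suc t) > 0"
    using assms(1) unfolding has_directed_cycle_def by blast
  then have "A $ v 0 $ v 1 > 0 \<or> B $ v 0 $ v 1 > 0"
    using max_add_entry_pos_iff by fastforce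
  then show ?thesis
  proof
    assume "A $ v 0 $ v 1 > 0"
    with m edges assms(2) show ?thesis
      using directed_cycle_max_add_stays_left by blast
  next
    assume "B $ v 0 $ v 1 > 0"
    moreover have "\<forall>t<m. (B \<oplus>\<^sub>m A) $ v t $ v (Suc t) > 0"
      using edges by (simp add: max_add_commute)
    ultimately show ?thesis
      using m assms(3) directed_cycle_max_add_stays_left by blast
  qed
qed

theorem lemma3p8:
  fixes A B :: "real^'n::finite^'n"
  assumes "nonneg_mat A" and "nonneg_mat B"
    and "max_nilpotent A" and "max_nilpotent B"
    and "has_directed_cycle (A \<oplus>\<^sub>m B)"
  shows "\<exists>u w. ((A \<otimes>\<^sub>m B) \<oplus>\<^sub>m (B \<otimes>\<^sub>m A)) $ u $ w > 0"
proof (rule ccontr)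
  assume no_pos: "\<not> ?thesis"
  have "False" if "A $ i $ k > 0" "B $ k $ j > 0" for i k j
    using no_pos that by (meson max_add_entry_pos_iff max_mult_entry_pos)
  moreover have "False" if "B $ i $ k > 0" "A $ k $ j > 0" for i k j
    using no_pos that by (meson max_add_entry_pos_iff max_mult_entry_pos)
  ultimately have "has_directed_cycle A \<or> has_directed_cycle B"
    using assms(5) directed_cycle_max_add by blast
  with assms(3,4) show False
    using max_nilpotent_no_directed_cycle by blast
qed

end
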